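(* Let $\mathcal{A}=(a_i)_{i=1}^\infty$ be a weakly increasing sequence of positive integers and let $k\geq 7$. If $\gcd A=1$ for every $(k-6)$-multisubset $A$ of $\{a_1,\ldots,a_k\}$, then the sequence $(p_\mathcal{A}(n,k))_{n\ge0}$ is asymptotically $2$-log-concave.
   Context: The restricted partition function $p_\mathcal{A}(n,k)$ is defined by $\sum_{n\ge0}p_\mathcal{A}(n,k)x^n=\prod_{i=1}^k(1-x^{a_i})^{-1}$ (partitions of $n$ with parts in the multiset $\{a_1,\ldots,a_k\}$, equal values with different indices counting as distinct colors). A $j$-multisubset of $\{a_1,\ldots,a_k\}$ is a sub-multiset obtained by choosing $j$ of the $k$ indices. For a real sequence $\omega=(w_i)_{i\ge0}$ define $\widehat{\mathcal L}\omega=(w_{i+1}^2-w_iw_{i+2})_{i\ge0}$ and $\widehat{\mathcal L}^j\omega=\widehat{\mathcal L}(\widehat{\mathcal L}^{j-1}\omega)$. The sequence $\omega$ is asymptotically $r$-log-concave if there is $N$ such that $(\widehat{\mathcal L}^j\omega)_i>0$ for all $j\in\{1,\ldots,r\}$ and all $i\geq N$. *)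

theory Defs
  imports "HOL-Computational_Algebra.Computational_Algebra"
begin

definition p_A :: "(nat \<Rightarrow> nat) \<Rightarrow> nat \<Rightarrow> nat \<Rightarrow> real" where
  "p_A a n k = fps_nth (\<Prod>i\<in>{1..k}. inverse (1 - fps_X ^ (a i))) n"

definition Lhat :: "(nat \<Rightarrow> real) \<Rightarrow> (nat \<Rightarrow> real)" where
  "Lhat w = (\<lambda>i. (w (i+1))^2 - w i * w (i+2))"

definition asymp_r_log_concave :: "nat \<Rightarrow> (nat \<Rightarrow> real) \<Rightarrow> bool" where
  "asymp_r_log_concave r w \<longleftrightarrow>
     (\<exists>N. \<forall>j\<in>{1..r}. \<forall>i\<ge>N. (Lhat ^^ j) w i > 0)"

end

theory Submission
  imports Defs "HOL-Computational_Algebra.Field_as_Ring"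
begin

(* Let F = prod_{i=1..k} 1/(1 - X^(a i)).  The factor 1 - X occurs k times in the
   denominator, and the cofactor Q = prod_i (1 + X + ... + X^(a i - 1)) has Q(1) = prod_i a i,
   so a Bezout identity A Q + B (1 - X)^5 = 1 gives F = A/(1 - X)^k + B (1 - X)^5 F with
   A(1) = 1/prod_i a i.  The gcd hypothesis makes the remainder small: for any k - 6 indices,
   1 - X is a polynomial combination of the 1 - X^(a i), so each factor 1 - X cancels one factor
   of the product, and the coefficients of (1 - X)^5 F are O(n^(k-6)).  Hence the j-th forward
   difference of p(n) is A(1) n^(k-1-j)/(k-1-j)! + o(n^(k-1-j)) for j <= 4.  Lhat p and
   Lhat (Lhat p) are polynomials in these differences; rescaled, they tend to c^2 d and
   2 c^4 d^2 (d - 1) with c = A(1)/(k-1)! and d = k - 1, both positive. *)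

lemma inverse_one_minus_X_power:
  assumes "a > 0"
  shows "inverse (1 - fps_X ^ a :: real fps) = Abs_fps (\<lambda>n. if a dvd n then 1 else 0)"
proof (rule fps_inverse_unique, rule fps_ext)
  fix n
  show "((1 - fps_X ^ a) * Abs_fps (\<lambda>n. if a dvd n then 1 else 0 :: real)) $ n = (1::real fps) $ n"
  proof (cases "n < a")
    case True
    then have "a dvd n \<longleftrightarrow> n = 0" using assms by (auto dest: dvd_imp_le)
    then show ?thesis using True by (simp add: algebra_simps fps_X_power_mult_nth)
  next
    case False
    then have "a dvd n \<longleftrightarrow> a dvd (n - a)"
      by (metis dvd_minus_self le_add_diff_inverse not_less dvd_add_right_iff)
    moreover have "n \<noteq> 0" using False assms by auto
    ultimately show ?thesis using False by (simp add: algebra_simps fps_X_power_mult_nth)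
  qed
qed

lemma one_minus_X_mult_nth:
  "((1 - fps_X) * f) $ n = f $ n - (if n = 0 then 0 else f $ (n - 1))" for f :: "real fps"
  by (simp add: algebra_simps)

lemma inverse_one_minus_X_pow_Suc:
  "inverse ((1 - fps_X) ^ Suc r :: real fps) = Abs_fps (\<lambda>n. real ((r + n) choose n))"
proof (rule fps_inverse_unique)
  show "(1 - fps_X) ^ Suc r * Abs_fps (\<lambda>n. real ((r + n) choose n)) = 1"
  proof (induction r)
    case 0
    show ?case by (rule fps_ext) (simp add: one_minus_X_mult_nth del: power_Suc)
  next
    case (Suc r)
    have "(1 - fps_X) * Abs_fps (\<lambda>n. real ((Suc r + n) choose n)) = Abs_fps (\<lambda>n. real ((r + n) choose n))"
    proof (rule fps_ext)
      fix n
      show "((1 - fps_X) * Abs_fps (\<lambda>n. real ((Suc r + n) choose n))) $ n = Abs_fps (\<lambda>n. real ((r + n) choose n)) $ n"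
        by (cases n) (simp_all add: one_minus_X_mult_nth)
    qed
    then show ?case
      by (simp only: power_Suc2[of "1 - fps_X" "Suc r"] mult.assoc Suc.IH)
  qed
qed

lemma one_minus_X_pow_mult_inverse:
  assumes "j \<le> k"
  shows "(1 - fps_X) ^ j * inverse ((1 - fps_X) ^ k) = inverse ((1 - fps_X :: 'a::field fps) ^ (k - j))"
proof -
  have "(1 - fps_X :: 'a fps) ^ k = (1 - fps_X) ^ j * (1 - fps_X) ^ (k - j)"
    using assms by (simp only: le_add_diff_inverse power_add[symmetric])
  then have "(1 - fps_X) ^ j * inverse ((1 - fps_X) ^ k)
      = ((1 - fps_X) ^ j * inverse ((1 - fps_X :: 'a fps) ^ j)) * inverse ((1 - fps_X) ^ (k - j))"
    by (simp only: fps_inverse_mult mult.assoc)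
  also have "(1 - fps_X) ^ j * inverse ((1 - fps_X :: 'a fps) ^ j) = 1"
    by (rule inverse_mult_eq_1') simp
  finally show ?thesis by (simp only: mult_1)
qed

definition fps_growth :: "nat \<Rightarrow> real fps \<Rightarrow> bool" where
  "fps_growth e f \<longleftrightarrow> (\<exists>C\<ge>0. \<forall>n. \<bar>f $ n\<bar> \<le> C * (real n + 1) ^ e)"

lemma fps_growth_add: "fps_growth e f \<Longrightarrow> fps_growth e g \<Longrightarrow> fps_growth e (f + g)"
proof -
  assume "fps_growth e f" "fps_growth e g"
  then obtain C D where "C \<ge> 0" "D \<ge> 0" and C: "\<And>n. \<bar>f $ n\<bar> \<le> C * (real n + 1) ^ e"
    and D: "\<And>n. \<bar>g $ n\<bar> \<le> D * (real n + 1) ^ e"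
    unfolding fps_growth_def by blast
  have "\<bar>(f + g) $ n\<bar> \<le> (C + D) * (real n + 1) ^ e" for n
  proof -
    have "\<bar>(f + g) $ n\<bar> \<le> \<bar>f $ n\<bar> + \<bar>g $ n\<bar>" by (simp add: abs_triangle_ineq)
    also have "\<dots> \<le> C * (real n + 1) ^ e + D * (real n + 1) ^ e" using C D by (rule add_mono)
    finally show ?thesis by (simp add: distrib_right)
  qed
  with \<open>C \<ge> 0\<close> \<open>D \<ge> 0\<close> show ?thesis
    unfolding fps_growth_def by (intro exI[of _ "C + D"]) auto
qed

lemma fps_growth_zero: "fps_growth e 0"
  unfolding fps_growth_def by (intro exI[of _ 0]) simp

lemma fps_growth_sum: "(\<And>i. i \<in> J \<Longrightarrow> fps_growth e (f i)) \<Longrightarrow> fps_growth e (\<Sum>i\<in>J. f i)"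
proof (induction J rule: infinite_finite_induct)
  case (insert x F) then show ?case by (simp add: fps_growth_add)
qed (simp_all add: fps_growth_zero)

lemma fps_growth_poly_mult:
  assumes "fps_growth e f"
  shows "fps_growth e (fps_of_poly u * f)"
proof -
  from assms obtain C where C: "C \<ge> 0" "\<And>n. \<bar>f $ n\<bar> \<le> C * (real n + 1) ^ e"
    unfolding fps_growth_def by blast
  define S where "S = (\<Sum>i\<le>degree u. \<bar>coeff u i\<bar>)"
  have "\<bar>(fps_of_poly u * f) $ n\<bar> \<le> (S * C) * (real n + 1) ^ e" for n
  proof -
    have "\<bar>(fps_of_poly u * f) $ n\<bar> = \<bar>\<Sum>i=0..n. coeff u i * f $ (n - i)\<bar>"
      by (simp add: fps_mult_nth)
    also have "\<dots> \<le> (\<Sum>i=0..n. \<bar>coeff u i\<bar> * (C * (real n + 1) ^ e))"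
    proof (rule order_trans[OF sum_abs], rule sum_mono)
      fix i assume i: "i \<in> {0..n}"
      have "\<bar>f $ (n - i)\<bar> \<le> C * (real (n - i) + 1) ^ e" using C(2) .
      also have "\<dots> \<le> C * (real n + 1) ^ e" using C(1) i by (intro mult_left_mono power_mono) auto
      finally show "\<bar>coeff u i * f $ (n - i)\<bar> \<le> \<bar>coeff u i\<bar> * (C * (real n + 1) ^ e)"
        by (simp add: abs_mult mult_left_mono)
    qed
    also have "\<dots> = (\<Sum>i=0..n. \<bar>coeff u i\<bar>) * (C * (real n + 1) ^ e)"
      by (simp add: sum_distrib_right)
    also have "\<dots> \<le> S * (C * (real n + 1) ^ e)"
    proof (rule mult_right_mono)
      have "(\<Sum>i=0..n. \<bar>coeff u i\<bar>) \<le> (\<Sum>i\<in>{0..n} \<union> {..degree u}. \<bar>coeff u i\<bar>)"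
        by (rule sum_mono2) auto
      also have "\<dots> = S" unfolding S_def
        by (rule sum.mono_neutral_right) (auto simp: coeff_eq_0)
      finally show "(\<Sum>i=0..n. \<bar>coeff u i\<bar>) \<le> S" .
    qed (use C(1) in auto)
    finally show ?thesis by (simp add: mult.assoc)
  qed
  moreover have "S \<ge> 0" unfolding S_def by (simp add: sum_nonneg)
  ultimately show ?thesis using C(1) unfolding fps_growth_def by (intro exI[of _ "S * C"]) auto
qed

definition partition_fps :: "(nat \<Rightarrow> nat) \<Rightarrow> nat set \<Rightarrow> real fps" where
  "partition_fps a R = (\<Prod>i\<in>R. inverse (1 - fps_X ^ a i))"

lemma partition_fps_nth_bounds:
  assumes "finite R" "R \<noteq> {}" "\<And>i. i \<in> R \<Longrightarrow> a i > 0"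
  shows "0 \<le> partition_fps a R $ n \<and> partition_fps a R $ n \<le> (real n + 1) ^ (card R - 1)"
  using assms
proof (induction R arbitrary: n rule: finite_ne_induct)
  case (singleton x)
  then show ?case by (simp add: partition_fps_def inverse_one_minus_X_power)
next
  case (insert x F)
  let ?g = "\<lambda>i. if a x dvd i then 1 else 0 :: real"
  have IH: "0 \<le> partition_fps a F $ m \<and> partition_fps a F $ m \<le> (real m + 1) ^ (card F - 1)" for m
    using insert by auto
  have eq: "partition_fps a (insert x F) $ n = (\<Sum>i=0..n. ?g i * partition_fps a F $ (n - i))"
    using insert by (simp add: partition_fps_def fps_mult_nth inverse_one_minus_X_power)
  have "(\<Sum>i=0..n. ?g i * partition_fps a F $ (n - i)) \<le> (\<Sum>i=0..n. (real n + 1) ^ (card F - 1))"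
  proof (rule sum_mono)
    fix i assume i: "i \<in> {0..n}"
    have "partition_fps a F $ (n - i) \<le> (real (n - i) + 1) ^ (card F - 1)" using IH by blast
    also have "\<dots> \<le> (real n + 1) ^ (card F - 1)" using i by (intro power_mono) auto
    finally show "?g i * partition_fps a F $ (n - i) \<le> (real n + 1) ^ (card F - 1)"
      using IH[of "n - i"] by auto
  qed
  also have "\<dots> = (real n + 1) ^ (card (insert x F) - 1)"
  proof -
    have "card (insert x F) - 1 = Suc (card F - 1)"
      using insert by (simp add: Suc_diff_le card_gt_0_iff Suc_leI)
    then show ?thesis by (simp add: algebra_simps)
  qed
  finally have "partition_fps a (insert x F) $ n \<le> (real n + 1) ^ (card (insert x F) - 1)"
    using eq by simp
  moreover have "0 \<le> (\<Sum>i=0..n. ?g i * partition_fps a F $ (n - i))"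
    using IH by (intro sum_nonneg) auto
  ultimately show ?case using eq by simp
qed

lemma fps_growth_partition_fps:
  assumes "finite R" "R \<noteq> {}" "\<And>i. i \<in> R \<Longrightarrow> a i > 0"
  shows "fps_growth (card R - 1) (partition_fps a R)"
  unfolding fps_growth_def using partition_fps_nth_bounds[OF assms] by (intro exI[of _ 1]) auto

lemma partition_fps_remove:
  assumes "finite R" "i \<in> R" "a i > 0"
  shows "(1 - fps_X ^ a i) * partition_fps a R = partition_fps a (R - {i})"
proof -
  have "partition_fps a R = inverse (1 - fps_X ^ a i) * partition_fps a (R - {i})"
    unfolding partition_fps_def using assms by (simp add: prod.remove)
  moreover have "(1 - fps_X ^ a i) * inverse (1 - fps_X ^ a i) = (1 :: real fps)"
    using assms by (intro inverse_mult_eq_1') simp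
  ultimately show ?thesis by (simp only: mult.assoc[symmetric] mult_1)
qed

lemma one_minus_X_pow_gcd_combination:
  "\<exists>u v. u * (1 - [:0,1:] ^ a) + v * (1 - [:0,1:] ^ b) = (1 - [:0,1:] ^ gcd a b :: 'a::comm_ring_1 poly)"
proof (induction "a + b" arbitrary: a b rule: less_induct)
  case less
  show ?case
  proof (cases "a = 0 \<or> b = 0")
    case True
    then show ?thesis
    proof
      assume "a = 0" then show ?thesis by (intro exI[of _ 0] exI[of _ 1]) simp
    next
      assume "b = 0" then show ?thesis by (intro exI[of _ 1] exI[of _ 0]) simp
    qed
  next
    case False
    show ?thesis
    proof (cases "b \<le> a")
      case True
      obtain u v where uv: "u * (1 - [:0,1:] ^ (a - b)) + v * (1 - [:0,1:] ^ b) = (1 - [:0,1:] ^ gcd (a - b) b :: 'a poly)"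
        using less(1)[of "a - b" b] False True by auto
      have "u * (1 - [:0,1:] ^ a) + (v - u * [:0,1:] ^ (a - b)) * (1 - [:0,1:] ^ b)
          = u * (1 - [:0,1:] ^ (a - b)) + v * (1 - [:0,1:] ^ b :: 'a poly)"
        using True by (simp add: algebra_simps flip: power_add)
      also have "\<dots> = 1 - [:0,1:] ^ gcd a b"
        using uv gcd_diff1_nat[OF True] by simp
      finally show ?thesis by blast
    next
      case False': False
      obtain u v where uv: "u * (1 - [:0,1:] ^ (b - a)) + v * (1 - [:0,1:] ^ a) = (1 - [:0,1:] ^ gcd (b - a) a :: 'a poly)"
        using less(1)[of "b - a" a] False False' by auto
      have "(v - u * [:0,1:] ^ (b - a)) * (1 - [:0,1:] ^ a) + u * (1 - [:0,1:] ^ b)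
          = u * (1 - [:0,1:] ^ (b - a)) + v * (1 - [:0,1:] ^ a :: 'a poly)"
        using False' by (simp add: algebra_simps flip: power_add)
      also have "\<dots> = 1 - [:0,1:] ^ gcd a b"
        using uv False' by (metis gcd_diff1_nat gcd.commute nat_le_linear)
      finally show ?thesis by blast
    qed
  qed
qed

lemma one_minus_X_pow_Gcd_combination:
  assumes "finite J"
  shows "\<exists>u. (\<Sum>i\<in>J. u i * (1 - [:0,1:] ^ a i)) = (1 - [:0,1:] ^ Gcd (a ` J) :: 'a::comm_ring_1 poly)"
  using assms
proof (induction J rule: finite_induct)
  case (insert x F)
  obtain u where u: "(\<Sum>i\<in>F. u i * (1 - [:0,1:] ^ a i)) = (1 - [:0,1:] ^ Gcd (a ` F) :: 'a poly)"
    using insert by blast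
  obtain U V where UV: "U * (1 - [:0,1:] ^ a x) + V * (1 - [:0,1:] ^ Gcd (a ` F))
      = (1 - [:0,1:] ^ gcd (a x) (Gcd (a ` F)) :: 'a poly)"
    using one_minus_X_pow_gcd_combination by blast
  define u' where "u' = (\<lambda>i. if i = x then U else V * u i)"
  have "(\<Sum>i\<in>F. u' i * (1 - [:0,1:] ^ a i)) = (\<Sum>i\<in>F. V * (u i * (1 - [:0,1:] ^ a i)))"
    using insert(2) by (intro sum.cong refl) (auto simp: u'_def)
  then have "(\<Sum>i\<in>insert x F. u' i * (1 - [:0,1:] ^ a i))
      = U * (1 - [:0,1:] ^ a x) + V * (\<Sum>i\<in>F. u i * (1 - [:0,1:] ^ a i))"
    using insert(1,2) by (simp add: u'_def sum_distrib_left)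
  also have "\<dots> = 1 - [:0,1:] ^ Gcd (a ` insert x F)"
    unfolding u UV by simp
  finally show ?case by blast
qed simp

lemma one_minus_X_mult_partition_fps:
  assumes "finite R" "J \<subseteq> R" "Gcd (a ` J) = 1" "\<And>i. i \<in> R \<Longrightarrow> a i > 0"
  shows "\<exists>u. (1 - fps_X) * partition_fps a R = (\<Sum>i\<in>J. fps_of_poly (u i) * partition_fps a (R - {i}))"
proof -
  have "finite J" using assms(1,2) by (rule finite_subset[rotated])
  then obtain u where u: "(\<Sum>i\<in>J. u i * (1 - [:0,1:] ^ a i)) = (1 - [:0,1:] :: real poly)"
    using one_minus_X_pow_Gcd_combination[of J a] assms(3) by auto
  have "1 - fps_X = (\<Sum>i\<in>J. fps_of_poly (u i) * (1 - fps_X ^ a i) :: real fps)"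
    using arg_cong[OF u, of fps_of_poly]
    by (simp add: fps_of_poly_sum fps_of_poly_mult fps_of_poly_diff fps_of_poly_power)
  then have "(1 - fps_X) * partition_fps a R = (\<Sum>i\<in>J. fps_of_poly (u i) * ((1 - fps_X ^ a i) * partition_fps a R))"
    by (simp add: sum_distrib_right mult.assoc)
  also have "\<dots> = (\<Sum>i\<in>J. fps_of_poly (u i) * partition_fps a (R - {i}))"
    using assms by (intro sum.cong refl) (auto simp: partition_fps_remove)
  finally show ?thesis by blast
qed

lemma fps_growth_one_minus_X_pow_mult_partition_fps:
  assumes "finite K" and pos: "\<And>i. i \<in> K \<Longrightarrow> a i > 0"
    and gcd: "\<And>J. J \<subseteq> K \<Longrightarrow> card J = g \<Longrightarrow> Gcd (a ` J) = 1"
    and "R \<subseteq> K" "card R \<ge> g + j"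
  shows "fps_growth (card R - 1 - j) ((1 - fps_X) ^ j * partition_fps a R)"
  using assms(4,5)
proof (induction j arbitrary: R)
  case 0
  have "R \<noteq> {}"
  proof
    assume "R = {}"
    then have "Gcd (a ` {}) = 1" using gcd[of "{}"] 0 by simp
    then show False by simp
  qed
  moreover have "finite R" using 0 \<open>finite K\<close> finite_subset by blast
  moreover have "\<And>i. i \<in> R \<Longrightarrow> a i > 0" using 0 pos by blast
  ultimately show ?case using fps_growth_partition_fps[of R a] by simp
next
  case (Suc j)
  have fin: "finite R" using Suc.prems(1) \<open>finite K\<close> finite_subset by blast
  have "g \<le> card R" using Suc.prems(2) by linarith
  then obtain J where J: "J \<subseteq> R" "card J = g" by (rule obtain_subset_with_card_n)
  have "Gcd (a ` J) = 1" using J Suc.prems(1) by (intro gcd) auto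
  moreover have "\<And>i. i \<in> R \<Longrightarrow> a i > 0" using Suc.prems(1) pos by blast
  ultimately obtain u where u: "(1 - fps_X) * partition_fps a R
      = (\<Sum>i\<in>J. fps_of_poly (u i) * partition_fps a (R - {i}))"
    using one_minus_X_mult_partition_fps[OF fin J(1)] by blast
  have "(1 - fps_X) ^ Suc j * partition_fps a R = (1 - fps_X) ^ j * ((1 - fps_X) * partition_fps a R)"
    by (simp add: mult_ac)
  also have "\<dots> = (\<Sum>i\<in>J. fps_of_poly (u i) * ((1 - fps_X) ^ j * partition_fps a (R - {i})))"
    unfolding u by (simp add: sum_distrib_left mult.left_commute)
  finally have eq: "(1 - fps_X) ^ Suc j * partition_fps a R = \<dots>" .
  have "fps_growth (card R - 1 - Suc j) ((1 - fps_X) ^ j * partition_fps a (R - {i}))" if "i \<in> J" for i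
  proof -
    have "card (R - {i}) = card R - 1" using that J fin by (simp add: card_Diff_singleton subsetD)
    moreover have "fps_growth (card (R - {i}) - 1 - j) ((1 - fps_X) ^ j * partition_fps a (R - {i}))"
    proof (rule Suc.IH)
      show "R - {i} \<subseteq> K" using Suc.prems(1) by blast
      show "g + j \<le> card (R - {i})" using Suc.prems(2) \<open>card (R - {i}) = card R - 1\<close> by linarith
    qed
    ultimately show ?thesis by simp
  qed
  then show ?case unfolding eq by (intro fps_growth_sum fps_growth_poly_mult)
qed

lemma coprime_one_minus_X_pow:
  fixes Q :: "real poly"
  assumes "poly Q 1 \<noteq> 0"
  shows "coprime ((1 - [:0,1:]) ^ r) Q"
proof -
  have "prime_elem (1 - [:0,1::real:])"
    using prime_elem_linear_field_poly[of "-1::real" 1] by (simp add: one_pCons)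
  moreover have "\<not> (1 - [:0,1:]) dvd Q"
    using assms by (auto elim!: dvdE)
  ultimately show ?thesis
    using prime_elem_imp_power_coprime coprime_commute by blast
qed

lemma partition_fps_decomposition:
  assumes "finite K" "\<And>i. i \<in> K \<Longrightarrow> a i > 0" "r > 0"
  obtains A B :: "real poly"
  where "poly A 1 = 1 / (\<Prod>i\<in>K. real (a i))"
    and "partition_fps a K = fps_of_poly A * inverse ((1 - fps_X) ^ card K)
           + fps_of_poly B * ((1 - fps_X) ^ r * partition_fps a K)"
proof -
  define F where "F = partition_fps a K"
  define Q where "Q = (\<Prod>i\<in>K. \<Sum>t<a i. [:0,1:] ^ t :: real poly)"
  have Q1: "poly Q 1 = (\<Prod>i\<in>K. real (a i))" by (simp add: Q_def poly_prod poly_sum)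
  have "(\<Prod>i\<in>K. real (a i)) \<noteq> 0" using assms(1,2) by simp
  then have "poly Q 1 \<noteq> 0" using Q1 by simp
  then have "gcd ((1 - [:0,1:]) ^ r) Q = 1"
    using coprime_one_minus_X_pow coprime_iff_gcd_eq_1 by blast
  then obtain A B where AB: "A * Q + B * (1 - [:0,1:]) ^ r = 1"
    using bezout_coefficients_fst_snd[of "(1 - [:0,1:]) ^ r" Q] by (metis add.commute)
  have "poly A 1 * poly Q 1 = 1"
    using arg_cong[OF AB, of "\<lambda>p. poly p 1"] \<open>r > 0\<close> by (simp add: zero_power)
  then have A1: "poly A 1 = 1 / (\<Prod>i\<in>K. real (a i))"
    using Q1 \<open>(\<Prod>i\<in>K. real (a i)) \<noteq> 0\<close> by (simp add: field_simps)
  have "(1 - fps_X) ^ card K * fps_of_poly Q = (\<Prod>i\<in>K. (1 - fps_X) * fps_of_poly (\<Sum>t<a i. [:0,1:] ^ t))"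
    by (simp add: Q_def fps_of_poly_prod prod.distrib)
  also have "\<dots> = (\<Prod>i\<in>K. 1 - fps_X ^ a i)"
    by (simp add: fps_of_poly_sum fps_of_poly_power one_diff_power_eq)
  finally have "(1 - fps_X) ^ card K * fps_of_poly Q * F = (\<Prod>i\<in>K. (1 - fps_X ^ a i) * inverse (1 - fps_X ^ a i))"
    by (simp add: F_def partition_fps_def prod.distrib)
  also have "\<dots> = 1"
    using assms(2) by (intro prod.neutral ballI inverse_mult_eq_1') simp
  finally have "inverse ((1 - fps_X) ^ card K) = fps_of_poly Q * F"
    by (intro fps_inverse_unique) (simp add: mult.assoc)
  moreover have "F = fps_of_poly A * (fps_of_poly Q * F) + fps_of_poly B * ((1 - fps_X) ^ r * F)"
    using arg_cong[OF AB, of "\<lambda>p. fps_of_poly p * F"]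
    by (simp add: fps_of_poly_add fps_of_poly_mult fps_of_poly_power fps_of_poly_diff algebra_simps)
  ultimately show ?thesis using that A1 unfolding F_def by simp
qed

lemma tendsto_prod_add_div_power:
  "(\<lambda>n. (\<Prod>l\<in>L. real n + g l) / real n ^ card L) \<longlonglongrightarrow> 1"
proof -
  have "(\<lambda>n. \<Prod>l\<in>L. 1 + g l / real n) \<longlonglongrightarrow> (\<Prod>l\<in>L. 1 + 0)"
    by (intro tendsto_prod tendsto_add tendsto_const lim_const_over_n)
  moreover have "\<forall>\<^sub>F n in sequentially. (\<Prod>l\<in>L. 1 + g l / real n) = (\<Prod>l\<in>L. real n + g l) / real n ^ card L"
  proof (rule eventually_sequentiallyI[of 1])
    fix n :: nat assume "n \<ge> 1"
    then have "(\<Prod>l\<in>L. 1 + g l / real n) = (\<Prod>l\<in>L. (real n + g l) / real n)"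
      by (intro prod.cong refl) (simp add: field_simps)
    then show "(\<Prod>l\<in>L. 1 + g l / real n) = (\<Prod>l\<in>L. real n + g l) / real n ^ card L"
      by (simp add: prod_dividef)
  qed
  ultimately show ?thesis by (simp add: Lim_transform_eventually)
qed

lemma real_binomial_eq_prod:
  "real ((r + N) choose N) = (\<Prod>l\<in>{0..<r}. real N + (real r - real l)) / fact r"
proof -
  have "real ((r + N) choose N) = real ((r + N) choose r)"
    by (simp add: binomial_symmetric[of r "r + N"])
  also have "\<dots> = real (r + N) gchoose r" by (rule binomial_gbinomial)
  also have "\<dots> = (\<Prod>l\<in>{0..<r}. real N + (real r - real l)) / fact r"
    by (simp add: gbinomial_prod_rev algebra_simps)
  finally show ?thesis .
qed

lemma poly_mult_inverse_one_minus_X_pow_nth_asymp: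
  "(\<lambda>n. (fps_of_poly A * inverse ((1 - fps_X) ^ Suc r)) $ (n + s) / real n ^ r)
     \<longlonglongrightarrow> poly A 1 / fact r"
proof -
  define d where "d = degree A"
  define P where "P = (\<lambda>i n. \<Prod>l\<in>{0..<r}. real n + (real s - real i + real r - real l))"
  have "(\<lambda>n. \<Sum>i\<le>d. coeff A i * (P i n / real n ^ r) / fact r) \<longlonglongrightarrow> (\<Sum>i\<le>d. coeff A i * 1 / fact r)"
    unfolding P_def by (intro tendsto_intros tendsto_prod_add_div_power[where L="{0..<r}", simplified]) auto
  moreover have "(\<Sum>i\<le>d. coeff A i * 1 / fact r) = poly A 1 / fact r"
    by (simp add: poly_altdef d_def sum_divide_distrib)
  moreover have "\<forall>\<^sub>F n in sequentially. (\<Sum>i\<le>d. coeff A i * (P i n / real n ^ r) / fact r)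
     = (fps_of_poly A * inverse ((1 - fps_X) ^ Suc r)) $ (n + s) / real n ^ r"
  proof (rule eventually_sequentiallyI[of d])
    fix n assume n: "n \<ge> d"
    have "(fps_of_poly A * inverse ((1 - fps_X) ^ Suc r)) $ (n + s)
        = (\<Sum>i=0..n+s. coeff A i * real ((r + (n + s - i)) choose (n + s - i)))"
      unfolding fps_mult_nth inverse_one_minus_X_pow_Suc by simp
    also have "\<dots> = (\<Sum>i\<le>d. coeff A i * real ((r + (n + s - i)) choose (n + s - i)))"
      using n by (intro sum.mono_neutral_right) (auto simp: d_def coeff_eq_0)
    also have "\<dots> = (\<Sum>i\<le>d. coeff A i * (P i n / fact r))"
    proof (intro sum.cong refl)
      fix i assume "i \<in> {..d}"
      then have "real (n + s - i) = real n + (real s - real i)" using n by simp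
      then show "coeff A i * real ((r + (n + s - i)) choose (n + s - i)) = coeff A i * (P i n / fact r)"
        unfolding real_binomial_eq_prod P_def by (simp add: algebra_simps)
    qed
    finally show "(\<Sum>i\<le>d. coeff A i * (P i n / real n ^ r) / fact r)
        = (fps_of_poly A * inverse ((1 - fps_X) ^ Suc r)) $ (n + s) / real n ^ r"
      by (simp add: sum_divide_distrib mult.commute)
  qed
  ultimately show ?thesis by (simp add: Lim_transform_eventually)
qed

lemma fps_growth_nth_div_power_tendsto_0:
  assumes "fps_growth b f" "b < q"
  shows "(\<lambda>n. f $ (n + s) / real n ^ q) \<longlonglongrightarrow> 0"
proof -
  obtain C where C: "C \<ge> 0" "\<And>n. \<bar>f $ n\<bar> \<le> C * (real n + 1) ^ b"
    using assms(1) unfolding fps_growth_def by blast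
  have "\<forall>\<^sub>F n in sequentially. norm (f $ (n + s) / real n ^ q) \<le> norm (1 / real n) * (C * 2 ^ b)"
  proof (rule eventually_sequentiallyI[of "s + 1"])
    fix n assume n: "n \<ge> s + 1"
    have "\<bar>f $ (n + s)\<bar> \<le> C * (real (n + s) + 1) ^ b" using C(2) .
    also have "\<dots> \<le> C * (2 * real n) ^ b" using n C(1) by (intro mult_left_mono power_mono) auto
    finally have "\<bar>f $ (n + s)\<bar> \<le> C * 2 ^ b * real n ^ b" by (simp add: power_mult_distrib)
    moreover have "real n ^ b * real n \<le> real n ^ q"
      using power_increasing[of "Suc b" q "real n"] assms(2) n by (simp add: mult.commute)
    ultimately have "\<bar>f $ (n + s)\<bar> / real n ^ q \<le> C * 2 ^ b * real n ^ b / (real n ^ b * real n)"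
      using n C(1) by (intro frac_le mult_pos_pos) auto
    then show "norm (f $ (n + s) / real n ^ q) \<le> norm (1 / real n) * (C * 2 ^ b)"
      using n by (simp add: abs_divide)
  qed
  then show ?thesis by (rule tendsto_0_le[OF lim_const_over_n])
qed

definition fdiff :: "(nat \<Rightarrow> real) \<Rightarrow> nat \<Rightarrow> real" where
  "fdiff w n = w (Suc n) - w n"

lemma funpow_fdiff_Suc: "(fdiff ^^ j) w (Suc n) = (fdiff ^^ j) w n + (fdiff ^^ Suc j) w n"
  by (simp add: fdiff_def)

lemma funpow_fdiff_fps_nth: "(fdiff ^^ j) (\<lambda>n. F $ n) n = ((1 - fps_X) ^ j * F) $ (n + j)"
proof (induction j arbitrary: n)
  case (Suc j)
  have "(fdiff ^^ Suc j) (\<lambda>n. F $ n) n = (fdiff ^^ j) (\<lambda>n. F $ n) (Suc n) - (fdiff ^^ j) (\<lambda>n. F $ n) n"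
    by (simp add: fdiff_def)
  also have "\<dots> = ((1 - fps_X) ^ j * F) $ Suc (n + j) - ((1 - fps_X) ^ j * F) $ (n + j)"
    using Suc.IH by simp
  also have "\<dots> = ((1 - fps_X) * ((1 - fps_X) ^ j * F)) $ Suc (n + j)"
    unfolding one_minus_X_mult_nth by simp
  finally show ?case by (simp add: mult.assoc)
qed simp

lemma funpow_fdiff_asymp:
  assumes F: "F = fps_of_poly A * inverse ((1 - fps_X) ^ Suc d) + fps_of_poly B * H"
    and H: "fps_growth b H" and "j \<le> d" "b + j < d"
  shows "(\<lambda>n. (fdiff ^^ j) (\<lambda>n. F $ n) n / real n ^ (d - j)) \<longlonglongrightarrow> poly A 1 / fact (d - j)"
proof -
  have "(1 - fps_X) ^ j * F = fps_of_poly A * ((1 - fps_X) ^ j * inverse ((1 - fps_X) ^ Suc d))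
      + fps_of_poly B * (1 - fps_X) ^ j * H"
    unfolding F by (simp only: distrib_left mult.left_commute mult.assoc)
  also have "\<dots> = fps_of_poly A * inverse ((1 - fps_X) ^ Suc (d - j))
      + fps_of_poly (B * (1 - [:0,1:]) ^ j) * H"
    using \<open>j \<le> d\<close> by (simp only: one_minus_X_pow_mult_inverse Suc_diff_le le_SucI
        fps_of_poly_mult fps_of_poly_power fps_of_poly_diff fps_of_poly_1 fps_of_poly_fps_X)
  finally have "(1 - fps_X) ^ j * F = \<dots>" .
  then have eq: "(fdiff ^^ j) (\<lambda>n. F $ n) n / real n ^ (d - j)
      = (fps_of_poly A * inverse ((1 - fps_X) ^ Suc (d - j))) $ (n + j) / real n ^ (d - j)
        + (fps_of_poly (B * (1 - [:0,1:]) ^ j) * H) $ (n + j) / real n ^ (d - j)" for n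
    by (simp only: funpow_fdiff_fps_nth fps_add_nth add_divide_distrib)
  have "(\<lambda>n. (fps_of_poly A * inverse ((1 - fps_X) ^ Suc (d - j))) $ (n + j) / real n ^ (d - j))
      \<longlonglongrightarrow> poly A 1 / fact (d - j)"
    by (rule poly_mult_inverse_one_minus_X_pow_nth_asymp)
  moreover have "(\<lambda>n. (fps_of_poly (B * (1 - [:0,1:]) ^ j) * H) $ (n + j) / real n ^ (d - j)) \<longlonglongrightarrow> 0"
    using fps_growth_poly_mult[OF H] \<open>b + j < d\<close> by (intro fps_growth_nth_div_power_tendsto_0) auto
  ultimately have "(\<lambda>n. (fdiff ^^ j) (\<lambda>n. F $ n) n / real n ^ (d - j)) \<longlonglongrightarrow> poly A 1 / fact (d - j) + 0"
    unfolding eq by (rule tendsto_add)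
  then show ?thesis by simp
qed

lemma Lhat_eq_fdiff: "Lhat w n = ((fdiff ^^ 1) w n)\<^sup>2 - (fdiff ^^ 0) w n * (fdiff ^^ 2) w n"
  by (simp add: Lhat_def fdiff_def numeral_2_eq_2 algebra_simps power2_eq_square)

lemma Lhat_Lhat_eq_fdiff:
  fixes w :: "nat \<Rightarrow> real" and n :: nat
  defines "x \<equiv> \<lambda>j. (fdiff ^^ j) w n"
  shows "Lhat (Lhat w) n = (x 1 * x 2 - x 0 * x 3 + (x 2 ^ 2 - x 1 * x 3))\<^sup>2
    - (x 1 ^ 2 - x 0 * x 2) * (x 2 ^ 2 - x 0 * x 4 + 2 * (x 2 * x 3 - x 1 * x 4) + (x 3 ^ 2 - x 2 * x 4))"
proof -
  have shift1: "(fdiff ^^ j) w (n + 1) = x j + x (Suc j)" for j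
    using funpow_fdiff_Suc[of j w n] by (simp add: x_def)
  have shift2: "(fdiff ^^ j) w (n + 2) = x j + 2 * x (Suc j) + x (Suc (Suc j))" for j
    using funpow_fdiff_Suc[of j w "Suc n"] funpow_fdiff_Suc[of j w n] funpow_fdiff_Suc[of "Suc j" w n]
    by (simp add: x_def numeral_2_eq_2)
  have L0: "Lhat w n = x 1 ^ 2 - x 0 * x 2"
    using Lhat_eq_fdiff[of w n] by (simp add: x_def)
  have L1: "Lhat w (n + 1) = (x 1 + x 2) ^ 2 - (x 0 + x 1) * (x 2 + x 3)"
    using Lhat_eq_fdiff[of w "n + 1"] shift1[of 0] shift1[of 1] shift1[of 2] by (simp add: numeral_eq_Suc)
  have L2: "Lhat w (n + 2) = (x 1 + 2 * x 2 + x 3) ^ 2 - (x 0 + 2 * x 1 + x 2) * (x 2 + 2 * x 3 + x 4)"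
    using Lhat_eq_fdiff[of w "n + 2"] shift2[of 0] shift2[of 1] shift2[of 2] by (simp add: numeral_eq_Suc)
  have "Lhat (Lhat w) n = (Lhat w (n + 1) - Lhat w n)\<^sup>2
      - Lhat w n * (Lhat w (n + 2) - 2 * Lhat w (n + 1) + Lhat w n)"
    unfolding Lhat_def[of "Lhat w"] by (simp add: algebra_simps power2_eq_square)
  then show ?thesis unfolding L0 L1 L2 by (simp add: algebra_simps power2_eq_square)
qed

lemma eventually_Lhat_Lhat_pos:
  fixes w l :: "nat \<Rightarrow> real"
  assumes lim: "\<And>j. j \<le> 4 \<Longrightarrow> (\<lambda>n. (fdiff ^^ j) w n / real n ^ (D - j)) \<longlonglongrightarrow> l j"
    and "D \<ge> 4"
    and pos1: "l 1 ^ 2 - l 0 * l 2 > 0"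
    and pos2: "(l 1 * l 2 - l 0 * l 3)\<^sup>2 - (l 1 ^ 2 - l 0 * l 2) * (l 2 ^ 2 - l 0 * l 4) > 0"
  shows "\<forall>\<^sub>F n in sequentially. Lhat w n > 0 \<and> Lhat (Lhat w) n > 0"
proof -
  define y where "y = (\<lambda>n j. (fdiff ^^ j) w n / real n ^ (D - j))"
  define P where "P = (\<lambda>y :: nat \<Rightarrow> real. y 1 ^ 2 - y 0 * y 2)"
  define Q where "Q = (\<lambda>(y :: nat \<Rightarrow> real) t :: real.
    (y 1 * y 2 - y 0 * y 3 + t * (y 2 ^ 2 - y 1 * y 3))\<^sup>2
    - P y * (y 2 ^ 2 - y 0 * y 4 + t * (2 * (y 2 * y 3 - y 1 * y 4)) + t\<^sup>2 * (y 3 ^ 2 - y 2 * y 4)))"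
  have y: "(\<lambda>n. y n j) \<longlonglongrightarrow> l j" if "j \<le> 4" for j
    using lim[OF that] by (simp add: y_def)
  have scale: "Lhat w n = real n ^ (2 * D - 2) * P (y n)
      \<and> Lhat (Lhat w) n = real n ^ (4 * D - 6) * Q (y n) (1 / real n)" if "n \<ge> 1" for n
  proof -
    obtain e where D: "D = e + 4" using \<open>D \<ge> 4\<close> le_Suc_ex by (metis add.commute)
    define m where "m = real n ^ e"
    have n: "real n > 0" using that by simp
    have x: "(fdiff ^^ j) w n = y n j * m * real n ^ (4 - j)" if "j \<le> 4" for j
    proof -
      have "real n ^ (D - j) = m * real n ^ (4 - j)"
        using that by (simp add: D m_def flip: power_add)
      moreover have "m > 0" using n by (simp add: m_def)
      ultimately show ?thesis using n by (simp add: y_def)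
    qed
    have "Lhat w n = m ^ 2 * real n ^ 6 * P (y n)"
      unfolding Lhat_eq_fdiff P_def using x[of 0] x[of 1] x[of 2]
      by (simp add: algebra_simps power2_eq_square eval_nat_numeral)
    moreover have "Lhat (Lhat w) n = m ^ 4 * real n ^ 10 * Q (y n) (1 / real n)"
      unfolding Lhat_Lhat_eq_fdiff Q_def P_def using n x[of 0] x[of 1] x[of 2] x[of 3] x[of 4]
      by (simp add: field_simps power2_eq_square eval_nat_numeral)
    moreover have "real n ^ (2 * D - 2) = m ^ 2 * real n ^ 6" "real n ^ (4 * D - 6) = m ^ 4 * real n ^ 10"
      by (simp_all add: D m_def ac_simps flip: power_mult power_add)
    ultimately show ?thesis by simp
  qed
  have "(\<lambda>n. P (y n)) \<longlonglongrightarrow> P l"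
    unfolding P_def by (intro tendsto_intros y) auto
  then have "\<forall>\<^sub>F n in sequentially. P (y n) > 0"
    using pos1 by (intro order_tendstoD(1)) (auto simp: P_def)
  moreover have "(\<lambda>n. Q (y n) (1 / real n)) \<longlonglongrightarrow> Q l 0"
    unfolding Q_def P_def by (intro tendsto_intros y lim_const_over_n) auto
  then have "\<forall>\<^sub>F n in sequentially. Q (y n) (1 / real n) > 0"
    using pos2 by (intro order_tendstoD(1)) (auto simp: Q_def P_def)
  ultimately have "\<forall>\<^sub>F n in sequentially. P (y n) > 0 \<and> Q (y n) (1 / real n) > 0 \<and> n \<ge> 1"
    using eventually_ge_at_top[of 1] by eventually_elim simp
  then show ?thesis
    by eventually_elim (simp add: scale)
qed

lemma Lhat_limit_conditions_fact:
  fixes C :: real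
  assumes "C > 0" "D \<ge> 4"
  defines "l \<equiv> \<lambda>j. C / fact (D - j)"
  shows "l 1 ^ 2 - l 0 * l 2 > 0"
    and "(l 1 * l 2 - l 0 * l 3)\<^sup>2 - (l 1 ^ 2 - l 0 * l 2) * (l 2 ^ 2 - l 0 * l 4) > 0"
proof -
  have step: "l (Suc j) = l j * (real D - real j)" if "j < D" for j
  proof -
    have "fact (D - j) = (real D - real j) * (fact (D - Suc j) :: real)"
      using that fact_reduce[of "D - j", where 'a=real] by (simp add: Suc_diff_Suc of_nat_diff)
    then show ?thesis using that by (simp add: l_def)
  qed
  define c d where "c = l 0" and "d = real D"
  have "c > 0" "d \<ge> 4" using assms by (simp_all add: c_def d_def l_def)
  have l: "l 1 = c * d" "l 2 = c * d * (d - 1)" "l 3 = c * d * (d - 1) * (d - 2)"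
      "l 4 = c * d * (d - 1) * (d - 2) * (d - 3)"
    using step[of 0] step[of 1] step[of 2] step[of 3] \<open>D \<ge> 4\<close>
    by (simp_all add: c_def d_def numeral_eq_Suc)
  have "l 1 ^ 2 - l 0 * l 2 = c ^ 2 * d"
    unfolding l c_def[symmetric] by (simp add: algebra_simps power2_eq_square)
  then show "l 1 ^ 2 - l 0 * l 2 > 0" using \<open>c > 0\<close> \<open>d \<ge> 4\<close> by simp
  have "(l 1 * l 2 - l 0 * l 3)\<^sup>2 - (l 1 ^ 2 - l 0 * l 2) * (l 2 ^ 2 - l 0 * l 4) = 2 * c ^ 4 * d ^ 2 * (d - 1)"
    unfolding l c_def[symmetric] by (simp add: algebra_simps power2_eq_square power4_eq_xxxx)
  then show "(l 1 * l 2 - l 0 * l 3)\<^sup>2 - (l 1 ^ 2 - l 0 * l 2) * (l 2 ^ 2 - l 0 * l 4) > 0"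
    using \<open>c > 0\<close> \<open>d \<ge> 4\<close> by simp
qed

lemma asymp_2_log_concaveI:
  assumes "\<forall>\<^sub>F n in sequentially. Lhat w n > 0 \<and> Lhat (Lhat w) n > 0"
  shows "asymp_r_log_concave 2 w"
proof -
  obtain N where N: "\<And>n. n \<ge> N \<Longrightarrow> Lhat w n > 0 \<and> Lhat (Lhat w) n > 0"
    using assms unfolding eventually_sequentially by blast
  show ?thesis unfolding asymp_r_log_concave_def
  proof (intro exI[of _ N] ballI allI impI)
    fix j i :: nat assume "j \<in> {1..2}" "N \<le> i"
    moreover from this(1) have "j = 1 \<or> j = 2" by auto
    ultimately show "(Lhat ^^ j) w i > 0" using N by (auto simp: numeral_2_eq_2)
  qed
qed

theorem proposition4p1:
  fixes a :: "nat \<Rightarrow> nat" and k :: nat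
  assumes mono: "\<And>i j. 1 \<le> i \<Longrightarrow> i \<le> j \<Longrightarrow> a i \<le> a j"
    and pos: "\<And>i. 1 \<le> i \<Longrightarrow> a i > 0"
    and k7: "k \<ge> 7"
    and gcd: "\<And>J. J \<subseteq> {1..k} \<Longrightarrow> card J = k - 6 \<Longrightarrow> Gcd (a ` J) = 1"
  shows "asymp_r_log_concave 2 (\<lambda>n. p_A a n k)"
proof -
  define F where "F = partition_fps a {1..k}"
  have pos': "\<And>i. i \<in> {1..k} \<Longrightarrow> a i > 0" using pos by simp
  obtain A B where A1: "poly A 1 = 1 / (\<Prod>i\<in>{1..k}. real (a i))"
    and dec: "F = fps_of_poly A * inverse ((1 - fps_X) ^ Suc (k - 1)) + fps_of_poly B * ((1 - fps_X) ^ 5 * F)"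
    using partition_fps_decomposition[of "{1..k}" a 5] pos' k7 unfolding F_def by (auto simp: Suc_diff_1)
  have "fps_growth (k - 6) ((1 - fps_X) ^ 5 * F)"
    using fps_growth_one_minus_X_pow_mult_partition_fps[of "{1..k}" a "k - 6" "{1..k}" 5] pos' gcd k7
    by (simp add: F_def)
  then have "(\<lambda>n. (fdiff ^^ j) (\<lambda>n. F $ n) n / real n ^ (k - 1 - j)) \<longlonglongrightarrow> poly A 1 / fact (k - 1 - j)"
    if "j \<le> 4" for j
    using funpow_fdiff_asymp[OF dec] that k7 by simp
  moreover have "poly A 1 > 0" unfolding A1 using pos' by (auto intro!: prod_pos)
  ultimately have "\<forall>\<^sub>F n in sequentially. Lhat (\<lambda>n. F $ n) n > 0 \<and> Lhat (Lhat (\<lambda>n. F $ n)) n > 0"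
    using Lhat_limit_conditions_fact[of "poly A 1" "k - 1"] k7
    by (intro eventually_Lhat_Lhat_pos[where D = "k - 1" and l = "\<lambda>j. poly A 1 / fact (k - 1 - j)"]) auto
  then show ?thesis
    unfolding p_A_def F_def partition_fps_def by (rule asymp_2_log_concaveI)
qed

end
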